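(* Let $n\ge2$ be even and $q>0$. Let $\omega=(nq,\ldots,nq,-nq,\ldots,-nq)\in\mathbb{R}^n$ (with $n/2$ entries equal to $nq$ followed by $n/2$ entries equal to $-nq$) and $k=(n,\ldots,n)$. Then, counting multiplicity, the number of equilibria $\theta\in(-\pi,\pi]^n$ satisfying $$\omega_\nu=\frac1n\sum_{\mu=1}^nk_\nu k_\mu\sin(\theta_\nu-\theta_\mu)\ (\nu=1,\ldots,n),\qquad \sum_{\mu=1}^nk_\mu e^{i\theta_\mu}\in\mathbb{R}_{\ge0},$$ is exactly $$2^n-\sum_{-q<\ell<q}\binom{n}{n/2+\ell},$$ the sum running over integers $\ell$. Hence the number of equilibria changes precisely at the integers $q=1,2,\ldots,n/2$.
   Context: Each such equilibrium corresponds to a sign pattern $\sigma\in\{-1,+1\}^n$ ($\sigma_\nu=\operatorname{sign}\cos\theta_\nu$) and a value $R=\left(\frac1n\sum_\mu k_\mu\cos\theta_\mu\right)^2>0$ that is a root of $f_\sigma(R)=-R+\frac1n\sum_{\mu=1}^n\sigma_\mu\sqrt{k_\mu^2R-\omega_\mu^2}$; "counting multiplicity" means the equilibrium is counted with the multiplicity of $R$ as a root of $f_\sigma$ (so an equilibrium coming from a double root is counted twice). *)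

theory Defs
  imports "HOL-Analysis.Analysis"
begin

definition is_equilibrium :: "nat \<Rightarrow> (nat \<Rightarrow> real) \<Rightarrow> (nat \<Rightarrow> real) \<Rightarrow> (nat \<Rightarrow> real) \<Rightarrow> bool" where
  "is_equilibrium n \<omega> k \<theta> \<longleftrightarrow>
     \<theta> \<in> PiE {1..n} (\<lambda>_. {-pi<..pi}) \<and>
     (\<forall>\<nu>\<in>{1..n}. \<omega> \<nu> = (1 / real n) * (\<Sum>\<mu>=1..n. k \<nu> * k \<mu> * sin (\<theta> \<nu> - \<theta> \<mu>))) \<and>
     (let z = (\<Sum>\<mu>=1..n. complex_of_real (k \<mu>) * exp (\<i> * complex_of_real (\<theta> \<mu>)))
      in Im z = 0 \<and> Re z \<ge> 0)"

definition f_sigma :: "nat \<Rightarrow> (nat \<Rightarrow> real) \<Rightarrow> (nat \<Rightarrow> real) \<Rightarrow> (nat \<Rightarrow> real) \<Rightarrow> real \<Rightarrow> real" where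
  "f_sigma n \<omega> k \<sigma> R = - R + (1 / real n) * (\<Sum>\<mu>=1..n. \<sigma> \<mu> * sqrt ((k \<mu>)\<^sup>2 * R - (\<omega> \<mu>)\<^sup>2))"

definition sign_pattern :: "(nat \<Rightarrow> real) \<Rightarrow> nat \<Rightarrow> real" where
  "sign_pattern \<theta> \<mu> = sgn (cos (\<theta> \<mu>))"

definition order_R :: "nat \<Rightarrow> (nat \<Rightarrow> real) \<Rightarrow> (nat \<Rightarrow> real) \<Rightarrow> real" where
  "order_R n k \<theta> = ((1 / real n) * (\<Sum>\<mu>=1..n. k \<mu> * cos (\<theta> \<mu>)))\<^sup>2"

definition root_mult :: "(real \<Rightarrow> real) \<Rightarrow> real \<Rightarrow> nat" where
  "root_mult f x = (LEAST m. (deriv ^^ m) f x \<noteq> 0)"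

definition eq_mult :: "nat \<Rightarrow> (nat \<Rightarrow> real) \<Rightarrow> (nat \<Rightarrow> real) \<Rightarrow> (nat \<Rightarrow> real) \<Rightarrow> nat" where
  "eq_mult n \<omega> k \<theta> = root_mult (f_sigma n \<omega> k (sign_pattern \<theta>)) (order_R n k \<theta>)"

end

theory Submission
  imports Defs
begin

text \<open>At an equilibrium the order parameter \<open>n (C + i S)\<close>, with \<open>C = \<Sum>cos \<theta>\<^sub>\<mu>\<close> and
  \<open>S = \<Sum>sin \<theta>\<^sub>\<mu>\<close>, is real and nonnegative, so \<open>S = 0\<close> and the equilibrium equations reduce to
  \<open>sin \<theta>\<^sub>\<nu> = \<plusminus>q / C\<close>.  Hence all \<open>|cos \<theta>\<^sub>\<nu>|\<close> agree, \<open>cos \<theta>\<^sub>\<nu> = \<sigma>\<^sub>\<nu> sqrt (1 - q\<^sup>2/C\<^sup>2)\<close>, and summing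
  shows that \<open>R = C\<^sup>2\<close> is a root of \<open>f\<^sub>\<sigma>(R) = -R + s sqrt (R - q\<^sup>2)\<close> with \<open>s = \<Sum>\<sigma>\<^sub>\<mu>\<close>.
  Conversely each sign pattern and each root determine exactly one equilibrium.  For \<open>s > 2q\<close>
  there are two simple roots, for \<open>s = 2q\<close> one double root and otherwise none, so the count
  is twice the number of sign patterns with \<open>\<Sum>\<sigma> \<ge> 2q\<close>; by the symmetry of the binomial
  coefficients this is \<open>2\<^sup>n\<close> minus the central ones.\<close>

lemma root_mult_eq_1:
  assumes "f x = 0" and "deriv f x \<noteq> 0"
  shows "root_mult f x = 1"
  unfolding root_mult_def
proof (rule Least_equality)
  show "(deriv ^^ 1) f x \<noteq> 0" using assms by simp
  show "1 \<le> m" if "(deriv ^^ m) f x \<noteq> 0" for m using that assms by (cases m) auto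
qed

lemma root_mult_eq_2:
  assumes "f x = 0" and "deriv f x = 0" and "deriv (deriv f) x \<noteq> 0"
  shows "root_mult f x = 2"
  unfolding root_mult_def
proof (rule Least_equality)
  show "(deriv ^^ 2) f x \<noteq> 0" using assms by (simp add: numeral_2_eq_2)
  show "2 \<le> m" if "(deriv ^^ m) f x \<noteq> 0" for m
    using that assms by (cases m; cases "m - 1") (auto simp: numeral_2_eq_2)
qed

definition reduced_f :: "real \<Rightarrow> real \<Rightarrow> real \<Rightarrow> real" where
  "reduced_f s q R = - R + s * sqrt (R - q\<^sup>2)"

definition reduced_roots :: "real \<Rightarrow> real \<Rightarrow> real set" where
  "reduced_roots s q = {R. q\<^sup>2 < R \<and> reduced_f s q R = 0}"

lemma reduced_f_has_real_derivative:
  assumes "q\<^sup>2 < R"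
  shows "(reduced_f s q has_real_derivative -1 + s / (2 * sqrt (R - q\<^sup>2))) (at R)"
proof -
  have "reduced_f s q = (\<lambda>R. - R + s * sqrt (R - q\<^sup>2))"
    by (simp add: fun_eq_iff reduced_f_def)
  then show ?thesis
    using assms by (auto intro!: derivative_eq_intros simp: field_simps)
qed

lemma deriv_reduced_f:
  "q\<^sup>2 < R \<Longrightarrow> deriv (reduced_f s q) R = -1 + s / (2 * sqrt (R - q\<^sup>2))"
  by (rule DERIV_imp_deriv[OF reduced_f_has_real_derivative])

lemma deriv2_reduced_f:
  assumes "q\<^sup>2 < R"
  shows "deriv (deriv (reduced_f s q)) R = - s / (4 * (R - q\<^sup>2) * sqrt (R - q\<^sup>2))"
proof -
  have "\<forall>\<^sub>F y in nhds R. y \<in> {q\<^sup>2<..}"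
    using assms by (intro eventually_nhds_in_open) auto
  then have "\<forall>\<^sub>F y in nhds R. deriv (reduced_f s q) y = -1 + s / (2 * sqrt (y - q\<^sup>2))"
    by eventually_elim (simp add: deriv_reduced_f)
  then have "deriv (deriv (reduced_f s q)) R = deriv (\<lambda>y. -1 + s / (2 * sqrt (y - q\<^sup>2))) R"
    by (rule deriv_cong_ev) simp
  also have "\<dots> = - s / (4 * (R - q\<^sup>2) * sqrt (R - q\<^sup>2))"
  proof (rule DERIV_imp_deriv)
    have "0 < sqrt (R - q\<^sup>2)" using assms by simp
    then show "((\<lambda>y. -1 + s / (2 * sqrt (y - q\<^sup>2))) has_real_derivative
        - s / (4 * (R - q\<^sup>2) * sqrt (R - q\<^sup>2))) (at R)"
      using assms by (auto intro!: derivative_eq_intros simp: field_simps power2_eq_square)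
  qed
  finally show ?thesis .
qed

lemma mem_reduced_roots_iff:
  assumes "q > 0"
  shows "R \<in> reduced_roots s q \<longleftrightarrow> 0 < s \<and> 0 < R \<and> R\<^sup>2 = s\<^sup>2 * (R - q\<^sup>2)"
proof
  assume "R \<in> reduced_roots s q"
  then have Rq: "q\<^sup>2 < R" and R: "R = s * sqrt (R - q\<^sup>2)"
    by (auto simp: reduced_roots_def reduced_f_def)
  have "0 < R" using Rq assms by (meson less_trans zero_less_power)
  moreover have "0 < sqrt (R - q\<^sup>2)" using Rq by simp
  ultimately have "0 < s" using R by (metis zero_less_mult_pos2)
  moreover have "R\<^sup>2 = s\<^sup>2 * (R - q\<^sup>2)"
    using R Rq by (metis power_mult_distrib real_sqrt_pow2 less_eq_real_def diff_ge_0_iff_ge)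
  ultimately show "0 < s \<and> 0 < R \<and> R\<^sup>2 = s\<^sup>2 * (R - q\<^sup>2)" using \<open>0 < R\<close> by simp
next
  assume A: "0 < s \<and> 0 < R \<and> R\<^sup>2 = s\<^sup>2 * (R - q\<^sup>2)"
  then have e: "R - q\<^sup>2 = (R/s)\<^sup>2" by (simp add: power_divide field_simps)
  then have "sqrt (R - q\<^sup>2) = R/s" using A by simp
  moreover have "0 < (R/s)\<^sup>2" using A by simp
  then have "q\<^sup>2 < R" using e by linarith
  ultimately show "R \<in> reduced_roots s q" using A by (simp add: reduced_roots_def reduced_f_def)
qed

lemma reduced_roots_empty:
  assumes "q > 0" and "s < 2 * q"
  shows "reduced_roots s q = {}"
proof (rule ccontr)
  assume "reduced_roots s q \<noteq> {}"
  then obtain R where "0 < s" and "R\<^sup>2 = s\<^sup>2 * (R - q\<^sup>2)"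
    using mem_reduced_roots_iff[OF assms(1)] by blast
  then have e: "(R - s\<^sup>2/2)\<^sup>2 = s\<^sup>2 * (s\<^sup>2/4 - q\<^sup>2)" by (simp add: power2_eq_square field_simps)
  have "s\<^sup>2 < (2*q)\<^sup>2" using assms \<open>0 < s\<close> by (intro power_strict_mono) auto
  then have "s\<^sup>2 * (s\<^sup>2/4 - q\<^sup>2) < 0" using \<open>0 < s\<close> by (intro mult_pos_neg) (auto simp: power2_eq_square)
  with e show False by (metis not_less zero_le_power2)
qed

lemma reduced_roots_eq:
  assumes "q > 0" and "2 * q \<le> s"
  defines "D \<equiv> sqrt (s\<^sup>2 - 4 * q\<^sup>2)"
  shows "reduced_roots s q = {(s\<^sup>2 + s * D) / 2, (s\<^sup>2 - s * D) / 2}"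
proof -
  have s: "0 < s" using assms by linarith
  have "(2*q)\<^sup>2 \<le> s\<^sup>2" using assms by (intro power_mono) auto
  then have DD: "D\<^sup>2 = s\<^sup>2 - 4 * q\<^sup>2" and D0: "0 \<le> D" unfolding D_def by (simp_all add: power_mult_distrib)
  have "D\<^sup>2 < s\<^sup>2" using DD assms by simp
  then have "D < s" using s D0 by (meson power_less_imp_less_base less_le)
  then have pos: "0 < (s\<^sup>2 - s * D) / 2" "0 < (s\<^sup>2 + s * D) / 2"
    using s D0 by (simp_all add: power2_eq_square add_pos_nonneg)
  have quad: "R\<^sup>2 = s\<^sup>2 * (R - q\<^sup>2) \<longleftrightarrow> R = (s\<^sup>2 + s * D) / 2 \<or> R = (s\<^sup>2 - s * D) / 2" for R
  proof -
    have sD: "(s * D / 2)\<^sup>2 = s\<^sup>2 * (s\<^sup>2 - 4 * q\<^sup>2) / 4"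
      by (simp add: power_mult_distrib power_divide DD)
    have "(R - s\<^sup>2/2)\<^sup>2 - (s * D / 2)\<^sup>2 = R\<^sup>2 - s\<^sup>2 * (R - q\<^sup>2)"
      unfolding sD by (simp add: power2_eq_square field_simps)
    then have "R\<^sup>2 = s\<^sup>2 * (R - q\<^sup>2) \<longleftrightarrow> (R - s\<^sup>2/2)\<^sup>2 = (s * D / 2)\<^sup>2"
      by (smt (verit))
    also have "\<dots> \<longleftrightarrow> R - s\<^sup>2/2 = s * D / 2 \<or> R - s\<^sup>2/2 = - (s * D / 2)"
      by (simp add: power2_eq_iff)
    finally show ?thesis by (auto simp: field_simps)
  qed
  show ?thesis
    using mem_reduced_roots_iff[OF assms(1)] quad pos s by auto
qed

lemma deriv_reduced_f_at_root:
  assumes "q > 0" and "R \<in> reduced_roots s q"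
  shows "deriv (reduced_f s q) R = -1 + s\<^sup>2 / (2 * R)"
proof -
  have "q\<^sup>2 < R" and "R = s * sqrt (R - q\<^sup>2)"
    using assms(2) by (auto simp: reduced_roots_def reduced_f_def)
  moreover have "0 < s" using mem_reduced_roots_iff assms by blast
  ultimately have "sqrt (R - q\<^sup>2) = R / s" by (simp add: field_simps)
  then show ?thesis
    using deriv_reduced_f[OF \<open>q\<^sup>2 < R\<close>] \<open>0 < s\<close> by (simp add: power2_eq_square)
qed

lemma sum_root_mult_reduced_roots:
  assumes "q > 0"
  shows "finite (reduced_roots s q)"
    and "(\<Sum>R\<in>reduced_roots s q. root_mult (reduced_f s q) R) = (if 2 * q \<le> s then 2 else 0)"
proof -
  have root: "q\<^sup>2 < R" "reduced_f s q R = 0" if "R \<in> reduced_roots s q" for R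
    using that by (auto simp: reduced_roots_def)
  consider "s < 2 * q" | "s = 2 * q" | "2 * q < s" by linarith
  then have "finite (reduced_roots s q) \<and>
      (\<Sum>R\<in>reduced_roots s q. root_mult (reduced_f s q) R) = (if 2 * q \<le> s then 2 else 0)"
  proof cases
    case 1
    then show ?thesis using reduced_roots_empty[OF assms] by simp
  next
    case 2
    then have Z: "reduced_roots s q = {s\<^sup>2 / 2}"
      using reduced_roots_eq[OF assms] by (simp add: power_mult_distrib)
    let ?x = "s\<^sup>2 / 2"
    have x: "q\<^sup>2 < ?x" "reduced_f s q ?x = 0" using root[of ?x] Z by simp_all
    have "deriv (reduced_f s q) ?x = 0"
      using deriv_reduced_f_at_root[OF assms] Z 2 assms by simp
    moreover have "deriv (deriv (reduced_f s q)) ?x \<noteq> 0"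
      using deriv2_reduced_f[OF x(1)] x(1) 2 assms by simp
    ultimately have "root_mult (reduced_f s q) ?x = 2" using root_mult_eq_2 x(2) by blast
    then show ?thesis using Z 2 by simp
  next
    case 3
    define D where "D = sqrt (s\<^sup>2 - 4 * q\<^sup>2)"
    have Z: "reduced_roots s q = {(s\<^sup>2 + s * D) / 2, (s\<^sup>2 - s * D) / 2}"
      using reduced_roots_eq[OF assms] 3 by (simp add: D_def)
    have "(2*q)\<^sup>2 < s\<^sup>2" using 3 assms by (intro power_strict_mono) auto
    then have "0 < D" unfolding D_def by (simp add: power_mult_distrib)
    moreover have "0 < s" using 3 assms by linarith
    ultimately have ne: "(s\<^sup>2 + s * D) / 2 \<noteq> (s\<^sup>2 - s * D) / 2" by simp
    have "root_mult (reduced_f s q) R = 1" if R: "R \<in> reduced_roots s q" for R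
    proof (rule root_mult_eq_1)
      show "reduced_f s q R = 0" using root R by blast
      have "0 < R" using mem_reduced_roots_iff[OF assms] R by blast
      moreover have "R \<noteq> s\<^sup>2 / 2" using R Z \<open>0 < D\<close> \<open>0 < s\<close> by auto
      ultimately show "deriv (reduced_f s q) R \<noteq> 0"
        using deriv_reduced_f_at_root[OF assms R] by (auto simp: field_simps)
    qed
    then show ?thesis using Z ne 3 by simp
  qed
  then show "finite (reduced_roots s q)"
    and "(\<Sum>R\<in>reduced_roots s q. root_mult (reduced_f s q) R) = (if 2 * q \<le> s then 2 else 0)"
    by blast+
qed

lemma sum_Pow_card:
  assumes "finite S"
  shows "(\<Sum>A\<in>Pow S. G (card A)) = (\<Sum>j\<le>card S. of_nat (card S choose j) * G j)"
proof -
  have "(\<Sum>A\<in>Pow S. G (card A)) = (\<Sum>j\<le>card S. \<Sum>A\<in>{A\<in>Pow S. card A = j}. G (card A))"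
    using assms by (intro sum.group[symmetric]) (auto intro: card_mono)
  also have "\<dots> = (\<Sum>j\<le>card S. of_nat (card S choose j) * G j)"
  proof (intro sum.cong refl)
    fix j
    have "(\<Sum>A\<in>{A\<in>Pow S. card A = j}. G (card A)) = of_nat (card {A. A \<subseteq> S \<and> card A = j}) * G j"
      by simp
    then show "(\<Sum>A\<in>{A\<in>Pow S. card A = j}. G (card A)) = of_nat (card S choose j) * G j"
      using n_subsets[OF assms] by simp
  qed
  finally show ?thesis .
qed

lemma sum_sign_vectors_eq_sum_Pow:
  fixes F :: "real \<Rightarrow> 'a::comm_monoid_add"
  shows "(\<Sum>\<sigma>\<in>PiE {1..n} (\<lambda>_. {-1,1::real}). F (\<Sum>\<mu>=1..n. \<sigma> \<mu>))
       = (\<Sum>A\<in>Pow {1..n}. F (2 * real (card A) - real n))"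
proof (rule sum.reindex_bij_witness[where i = "\<lambda>A. \<lambda>\<mu>\<in>{1..n}. if \<mu> \<in> A then 1 else -1"
      and j = "\<lambda>\<sigma>. {\<mu>\<in>{1..n}. \<sigma> \<mu> = 1}"])
  fix \<sigma> assume \<sigma>: "\<sigma> \<in> PiE {1..n} (\<lambda>_. {-1,1::real})"
  define A where "A = {\<mu>\<in>{1..n}. \<sigma> \<mu> = 1}"
  show "A \<in> Pow {1..n}" by (auto simp: A_def)
  show "(\<lambda>\<mu>\<in>{1..n}. if \<mu> \<in> A then 1 else -1) = \<sigma>"
    using \<sigma> by (auto simp: A_def PiE_def Pi_def extensional_def fun_eq_iff)
  have "A \<subseteq> {1..n}" by (auto simp: A_def)
  then have "card A \<le> n" using card_mono[of "{1..n}" A] by simp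
  have "(\<Sum>\<mu>=1..n. \<sigma> \<mu>) = (\<Sum>\<mu>=1..n. if \<mu> \<in> A then 1 else -1 :: real)"
    using \<sigma> by (intro sum.cong) (auto simp: A_def PiE_def Pi_def)
  also have "\<dots> = real (card ({1..n} \<inter> A)) - real (card ({1..n} - A))"
    by (simp add: sum.If_cases Diff_eq)
  also have "\<dots> = 2 * real (card A) - real n"
    using \<open>A \<subseteq> {1..n}\<close> \<open>card A \<le> n\<close> finite_subset[OF \<open>A \<subseteq> {1..n}\<close>]
    by (simp add: Int_absorb1 card_Diff_subset of_nat_diff)
  finally show "F (2 * real (card A) - real n) = F (\<Sum>\<mu>=1..n. \<sigma> \<mu>)" by simp
next
  fix A assume "A \<in> Pow {1..n}"
  then show "(\<lambda>\<mu>\<in>{1..n}. if \<mu> \<in> A then 1 else -1) \<in> PiE {1..n} (\<lambda>_. {-1,1::real})"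
    and "{\<mu>\<in>{1..n}. (\<lambda>\<mu>\<in>{1..n}. if \<mu> \<in> A then 1 else -1 :: real) \<mu> = 1} = A"
    by auto
qed

text \<open>The binomial row \<open>2m\<close> splits into two tails \<open>|j - m| \<ge> q\<close>, equal by the symmetry
  \<open>j \<mapsto> 2m - j\<close>, and the centre \<open>|j - m| < q\<close>.\<close>
lemma binomial_tails_centre:
  fixes q :: real
  assumes "q > 0"
  shows "2 * (\<Sum>j\<in>{j\<in>{..2*m}. q \<le> real j - real m}. 2*m choose j)
           + (\<Sum>j\<in>{j\<in>{..2*m}. \<bar>real j - real m\<bar> < q}. 2*m choose j) = 2 ^ (2*m)"
proof -
  define U where "U = {j\<in>{..2*m}. q \<le> real j - real m}"
  define L where "L = {j\<in>{..2*m}. q \<le> real m - real j}"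
  define M where "M = {j\<in>{..2*m}. \<bar>real j - real m\<bar> < q}"
  have "finite U" "finite L" "finite M" by (auto simp: U_def L_def M_def)
  have "U \<inter> (L \<union> M) = {}" "L \<inter> M = {}" using assms by (auto simp: U_def L_def M_def)
  have "{..2*m} = U \<union> (L \<union> M)" by (auto simp: U_def L_def M_def)
  then have "(\<Sum>j\<le>2*m. 2*m choose j) = (\<Sum>j\<in>U \<union> (L \<union> M). 2*m choose j)" by simp
  also have "\<dots> = (\<Sum>j\<in>U. 2*m choose j) + (\<Sum>j\<in>L. 2*m choose j) + (\<Sum>j\<in>M. 2*m choose j)"
    using \<open>finite U\<close> \<open>finite L\<close> \<open>finite M\<close> \<open>U \<inter> (L \<union> M) = {}\<close> \<open>L \<inter> M = {}\<close>
    by (simp add: sum.union_disjoint)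
  finally have "(\<Sum>j\<le>2*m. 2*m choose j)
      = (\<Sum>j\<in>U. 2*m choose j) + (\<Sum>j\<in>L. 2*m choose j) + (\<Sum>j\<in>M. 2*m choose j)" .
  moreover have "(\<Sum>j\<in>L. 2*m choose j) = (\<Sum>j\<in>U. 2*m choose j)"
  proof (rule sum.reindex_bij_witness[where i = "\<lambda>j. 2*m - j" and j = "\<lambda>j. 2*m - j"])
    fix j assume "j \<in> L"
    then show "2*m - (2*m - j) = j" "2*m - j \<in> U" "(2*m choose (2*m - j)) = (2*m choose j)"
      by (auto simp: L_def U_def of_nat_diff binomial_symmetric[of j "2*m"])
  next
    fix j assume "j \<in> U"
    then show "2*m - (2*m - j) = j" "2*m - j \<in> L" by (auto simp: L_def U_def of_nat_diff)
  qed
  ultimately show ?thesis by (simp add: choose_row_sum U_def M_def)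
qed

lemma finite_ints_between:
  fixes a b :: real
  shows "finite {l::int. a < of_int l \<and> of_int l < b}"
proof (rule finite_subset)
  show "{l::int. a < of_int l \<and> of_int l < b} \<subseteq> {\<lfloor>a\<rfloor>..\<lceil>b\<rceil>}"
    by (auto simp: floor_le_iff le_ceiling_iff)
qed simp

lemma sum_centred_binomial:
  fixes q :: real
  shows "(\<Sum>l\<in>{l::int. - q < of_int l \<and> of_int l < q}.
            if 0 \<le> int m + l then int (2*m choose nat (int m + l)) else 0)
       = int (\<Sum>j\<in>{j\<in>{..2*m}. \<bar>real j - real m\<bar> < q}. 2*m choose j)"
proof -
  define L where "L = {l::int. - q < of_int l \<and> of_int l < q}"
  define L' where "L' = {l\<in>L. - int m \<le> l \<and> l \<le> int m}"
  define F where "F l = (if 0 \<le> int m + l then int (2*m choose nat (int m + l)) else 0)" for l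
  have "(\<Sum>l\<in>L. F l) = (\<Sum>l\<in>L'. F l)"
  proof (rule sum.mono_neutral_right)
    show "finite L" unfolding L_def by (rule finite_ints_between)
    show "\<forall>l\<in>L - L'. F l = 0" by (auto simp: L'_def F_def)
  qed (auto simp: L'_def)
  also have "\<dots> = (\<Sum>j\<in>{j\<in>{..2*m}. \<bar>real j - real m\<bar> < q}. int (2*m choose j))"
  proof (rule sum.reindex_bij_witness[where i = "\<lambda>j. int j - int m" and j = "\<lambda>l. nat (int m + l)"])
    fix l assume "l \<in> L'"
    then show "int (nat (int m + l)) - int m = l"
      and "nat (int m + l) \<in> {j\<in>{..2*m}. \<bar>real j - real m\<bar> < q}"
      and "int (2*m choose nat (int m + l)) = F l"
      by (auto simp: L'_def L_def F_def)
  next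
    fix j assume "j \<in> {j\<in>{..2*m}. \<bar>real j - real m\<bar> < q}"
    then show "nat (int m + (int j - int m)) = j" and "int j - int m \<in> L'"
      by (auto simp: L'_def L_def)
  qed
  finally show ?thesis by (simp add: L_def F_def)
qed

lemma sum_sign_vectors_threshold:
  fixes q :: real
  assumes "even n" and "q > 0"
  shows "int (\<Sum>\<sigma>\<in>PiE {1..n} (\<lambda>_. {-1,1::real}). if 2 * q \<le> (\<Sum>\<mu>=1..n. \<sigma> \<mu>) then 2 else 0 :: nat)
       = 2 ^ n - (\<Sum>l\<in>{l::int. - q < of_int l \<and> of_int l < q}.
                    if 0 \<le> int (n div 2) + l then int (n choose nat (int (n div 2) + l)) else 0)"
proof -
  obtain m where n: "n = 2 * m" using assms(1) by blast
  then have "n div 2 = m" by simp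
  define U where "U = {j\<in>{..n}. q \<le> real j - real m}"
  have "(\<Sum>\<sigma>\<in>PiE {1..n} (\<lambda>_. {-1,1::real}). if 2 * q \<le> (\<Sum>\<mu>=1..n. \<sigma> \<mu>) then 2 else 0 :: nat)
      = (\<Sum>A\<in>Pow {1..n}. if 2 * q \<le> 2 * real (card A) - real n then 2 else 0)"
    by (rule sum_sign_vectors_eq_sum_Pow)
  also have "\<dots> = (\<Sum>j\<le>n. (n choose j) * (if 2 * q \<le> 2 * real j - real n then 2 else 0))"
    using sum_Pow_card[of "{1..n}" "\<lambda>j. if 2 * q \<le> 2 * real j - real n then 2 else 0::nat"]
    by simp
  also have "\<dots> = (\<Sum>j\<le>n. if q \<le> real j - real m then 2 * (n choose j) else 0)"
    by (intro sum.cong) (auto simp: n)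
  also have "\<dots> = (\<Sum>j\<in>U. 2 * (n choose j))"
    unfolding U_def by (rule sum.inter_filter[symmetric]) simp
  also have "\<dots> = 2 * (\<Sum>j\<in>U. n choose j)"
    by (simp add: sum_distrib_left)
  finally have count: "(\<Sum>\<sigma>\<in>PiE {1..n} (\<lambda>_. {-1,1::real}). if 2 * q \<le> (\<Sum>\<mu>=1..n. \<sigma> \<mu>) then 2 else 0 :: nat)
      = 2 * (\<Sum>j\<in>U. n choose j)" .
  have "2 * (\<Sum>j\<in>U. n choose j) + (\<Sum>j\<in>{j\<in>{..n}. \<bar>real j - real m\<bar> < q}. n choose j) = 2 ^ n"
    using binomial_tails_centre[OF assms(2), of m] by (simp only: U_def n)
  from arg_cong[where f = int, OF this]
  have "int (2 * (\<Sum>j\<in>U. n choose j)) + int (\<Sum>j\<in>{j\<in>{..n}. \<bar>real j - real m\<bar> < q}. n choose j) = 2 ^ n"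
    by simp
  then show ?thesis
    using sum_centred_binomial[where q = q and m = m] unfolding count \<open>n div 2 = m\<close> unfolding n by (simp add: eq_diff_eq)
qed

lemma cos_sin_Arg_Complex:
  assumes "a\<^sup>2 + b\<^sup>2 = 1"
  shows "cos (Arg (Complex a b)) = a" and "sin (Arg (Complex a b)) = b"
proof -
  have "norm (Complex a b) = 1" using assms by (simp add: complex_norm)
  then have "Complex a b \<noteq> 0" by auto
  with \<open>norm (Complex a b) = 1\<close> show "cos (Arg (Complex a b)) = a" "sin (Arg (Complex a b)) = b"
    by (simp_all add: cos_Arg sin_Arg)
qed

lemma eq_if_cos_sin_eq:
  assumes "a \<in> {-pi<..pi}" and "b \<in> {-pi<..pi}" and "cos a = cos b" and "sin a = sin b"
  shows "a = b"
proof -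
  have "cis a = cis b" using assms by (simp add: complex_eq_iff)
  moreover have "sgn (cis a) = cis a" by (simp add: sgn_div_norm)
  ultimately have "Arg (cis a) = a" and "Arg (cis a) = b" using assms by (auto intro!: cis_Arg_unique)
  then show ?thesis by simp
qed

definition block_sign :: "nat \<Rightarrow> nat \<Rightarrow> real" where
  "block_sign n \<mu> = (if \<mu> \<le> n div 2 then 1 else -1)"

lemma sum_block_sign:
  assumes "even n"
  shows "(\<Sum>\<mu>=1..n. block_sign n \<mu>) = 0"
proof -
  obtain m where n: "n = 2 * m" using assms by blast
  have "{1..n} \<inter> {\<mu>. \<mu> \<le> n div 2} = {1..m}" and "{1..n} \<inter> - {\<mu>. \<mu> \<le> n div 2} = {m<..2*m}"
    using n by auto
  then show ?thesis by (simp add: block_sign_def sum.If_cases n)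
qed

definition equilibrium_angles :: "nat \<Rightarrow> real \<Rightarrow> (nat \<Rightarrow> real) \<Rightarrow> real \<Rightarrow> nat \<Rightarrow> real" where
  "equilibrium_angles n q \<sigma> R =
     (\<lambda>\<mu>\<in>{1..n}. Arg (Complex (\<sigma> \<mu> * sqrt (1 - q\<^sup>2 / R)) (block_sign n \<mu> * q / sqrt R)))"

lemma cos_sin_equilibrium_angles:
  assumes "\<mu> \<in> {1..n}" and "\<sigma> \<mu> \<in> {-1, 1}" and "q\<^sup>2 < R"
  shows "cos (equilibrium_angles n q \<sigma> R \<mu>) = \<sigma> \<mu> * sqrt (1 - q\<^sup>2 / R)"
    and "sin (equilibrium_angles n q \<sigma> R \<mu>) = block_sign n \<mu> * q / sqrt R"
proof -
  have "0 < R" using assms(3) by (meson le_less_trans zero_le_power2)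
  have "q\<^sup>2 / R < 1" using assms(3) \<open>0 < R\<close> by (simp add: field_simps)
  have "(\<sigma> \<mu>)\<^sup>2 = 1" "(block_sign n \<mu>)\<^sup>2 = 1"
    using assms(2) by (auto simp: block_sign_def)
  then have "(\<sigma> \<mu> * sqrt (1 - q\<^sup>2 / R))\<^sup>2 + (block_sign n \<mu> * q / sqrt R)\<^sup>2 = 1"
    using \<open>0 < R\<close> \<open>q\<^sup>2 / R < 1\<close> by (simp add: power_mult_distrib power_divide)
  then show "cos (equilibrium_angles n q \<sigma> R \<mu>) = \<sigma> \<mu> * sqrt (1 - q\<^sup>2 / R)"
    and "sin (equilibrium_angles n q \<sigma> R \<mu>) = block_sign n \<mu> * q / sqrt R"
    using assms(1) by (simp_all add: equilibrium_angles_def cos_sin_Arg_Complex)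
qed

context
  fixes n :: nat and q :: real and \<omega> k :: "nat \<Rightarrow> real"
  assumes even_n: "even n" and n_ge_2: "n \<ge> 2" and q_pos: "q > 0"
    and \<omega>_eq: "\<omega> = (\<lambda>\<nu>. if \<nu> \<le> n div 2 then real n * q else - (real n * q))"
    and k_eq: "k = (\<lambda>\<nu>. real n)"
begin

lemma f_sigma_eq_reduced_f: "f_sigma n \<omega> k \<sigma> = reduced_f (\<Sum>\<mu>=1..n. \<sigma> \<mu>) q"
proof
  fix R
  have "(k \<mu>)\<^sup>2 * R - (\<omega> \<mu>)\<^sup>2 = (real n)\<^sup>2 * (R - q\<^sup>2)" for \<mu>
    by (simp add: k_eq \<omega>_eq power_mult_distrib algebra_simps)
  then have "sqrt ((k \<mu>)\<^sup>2 * R - (\<omega> \<mu>)\<^sup>2) = real n * sqrt (R - q\<^sup>2)" for \<mu>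
    by (simp add: real_sqrt_mult)
  then have "(\<Sum>\<mu>=1..n. \<sigma> \<mu> * sqrt ((k \<mu>)\<^sup>2 * R - (\<omega> \<mu>)\<^sup>2))
      = real n * ((\<Sum>\<mu>=1..n. \<sigma> \<mu>) * sqrt (R - q\<^sup>2))"
    by (simp add: sum_distrib_left sum_distrib_right algebra_simps)
  then show "f_sigma n \<omega> k \<sigma> R = reduced_f (\<Sum>\<mu>=1..n. \<sigma> \<mu>) q R"
    using n_ge_2 by (simp add: f_sigma_def reduced_f_def)
qed

lemma order_R_eq: "order_R n k \<theta> = (\<Sum>\<mu>=1..n. cos (\<theta> \<mu>))\<^sup>2"
  using n_ge_2 by (simp add: order_R_def k_eq flip: sum_distrib_left)

text \<open>With \<open>S = \<Sum>sin \<theta>\<close> and \<open>C = \<Sum>cos \<theta>\<close> the coupling term is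
  \<open>n (sin \<theta>\<^sub>\<nu> C - cos \<theta>\<^sub>\<nu> S)\<close> and the order parameter is \<open>n (C + i S)\<close>.\<close>
lemma is_equilibrium_iff:
  "is_equilibrium n \<omega> k \<theta> \<longleftrightarrow>
     \<theta> \<in> PiE {1..n} (\<lambda>_. {-pi<..pi}) \<and> (\<Sum>\<mu>=1..n. sin (\<theta> \<mu>)) = 0 \<and> 0 \<le> (\<Sum>\<mu>=1..n. cos (\<theta> \<mu>)) \<and>
     (\<forall>\<nu>\<in>{1..n}. sin (\<theta> \<nu>) * (\<Sum>\<mu>=1..n. cos (\<theta> \<mu>)) = q * block_sign n \<nu>)"
proof -
  have n: "0 < real n" using n_ge_2 by simp
  have coupling: "(1 / real n) * (\<Sum>\<mu>=1..n. k \<nu> * k \<mu> * sin (\<theta> \<nu> - \<theta> \<mu>))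
      = real n * (sin (\<theta> \<nu>) * (\<Sum>\<mu>=1..n. cos (\<theta> \<mu>)) - cos (\<theta> \<nu>) * (\<Sum>\<mu>=1..n. sin (\<theta> \<mu>)))" for \<nu>
    using n by (simp add: k_eq sin_diff sum_distrib_left sum_subtractf algebra_simps flip: sum_divide_distrib)
  have order_parameter:
    "Re (\<Sum>\<mu>=1..n. complex_of_real (k \<mu>) * exp (\<i> * complex_of_real (\<theta> \<mu>))) = real n * (\<Sum>\<mu>=1..n. cos (\<theta> \<mu>))"
    "Im (\<Sum>\<mu>=1..n. complex_of_real (k \<mu>) * exp (\<i> * complex_of_real (\<theta> \<mu>))) = real n * (\<Sum>\<mu>=1..n. sin (\<theta> \<mu>))"
    by (simp_all add: k_eq sum_distrib_left Re_exp Im_exp)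
  have \<omega>: "\<omega> \<nu> = real n * (q * block_sign n \<nu>)" for \<nu>
    by (simp add: \<omega>_eq block_sign_def)
  show ?thesis
    unfolding is_equilibrium_def Let_def coupling order_parameter \<omega>
    using n by (auto simp: zero_le_mult_iff)
qed

lemma equilibrium_sin:
  assumes "is_equilibrium n \<omega> k \<theta>" and "\<nu> \<in> {1..n}"
  defines "C \<equiv> \<Sum>\<mu>=1..n. cos (\<theta> \<mu>)"
  shows "0 < C" and "sin (\<theta> \<nu>) = q * block_sign n \<nu> / C"
proof -
  have eq: "sin (\<theta> \<nu>) * C = q * block_sign n \<nu>" if "\<nu> \<in> {1..n}" for \<nu>
    using assms(1) that unfolding is_equilibrium_iff C_def by blast
  have "q * block_sign n 1 \<noteq> 0" using q_pos by (simp add: block_sign_def)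
  then have "C \<noteq> 0" using eq[of 1] n_ge_2 by auto
  moreover have "0 \<le> C" using assms(1) unfolding is_equilibrium_iff C_def by blast
  ultimately show "0 < C" by simp
  then show "sin (\<theta> \<nu>) = q * block_sign n \<nu> / C" using eq[OF assms(2)] by (simp add: field_simps)
qed

text \<open>All \<open>|sin \<theta>\<^sub>\<mu>|\<close> equal \<open>q/C\<close>, so all \<open>|cos \<theta>\<^sub>\<mu>|\<close> are equal; they cannot vanish
  since their signed sum is \<open>C > 0\<close>.\<close>
lemma equilibrium_cos:
  assumes "is_equilibrium n \<omega> k \<theta>"
  defines "C \<equiv> \<Sum>\<mu>=1..n. cos (\<theta> \<mu>)"
  shows "q\<^sup>2 < C\<^sup>2"
    and "\<forall>\<mu>\<in>{1..n}. sign_pattern \<theta> \<mu> \<in> {-1, 1} \<and> cos (\<theta> \<mu>) = sign_pattern \<theta> \<mu> * sqrt (1 - q\<^sup>2 / C\<^sup>2)"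
proof -
  define c where "c = sqrt (1 - q\<^sup>2 / C\<^sup>2)"
  have abs_cos: "\<bar>cos (\<theta> \<mu>)\<bar> = c" if "\<mu> \<in> {1..n}" for \<mu>
  proof -
    have "(sin (\<theta> \<mu>))\<^sup>2 = q\<^sup>2 / C\<^sup>2"
      using equilibrium_sin[OF assms(1) that] by (simp add: C_def block_sign_def power_divide)
    then have "(cos (\<theta> \<mu>))\<^sup>2 = 1 - q\<^sup>2 / C\<^sup>2" using sin_cos_squared_add[of "\<theta> \<mu>"] by linarith
    then show ?thesis unfolding c_def by (metis real_sqrt_abs)
  qed
  have "0 < c"
  proof (rule ccontr)
    assume "\<not> 0 < c"
    then have "\<forall>\<mu>\<in>{1..n}. cos (\<theta> \<mu>) = 0" using abs_cos by force
    then have "C = 0" unfolding C_def by simp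
    then show False using equilibrium_sin(1)[OF assms(1), of 1] n_ge_2 by (simp add: C_def)
  qed
  then show "q\<^sup>2 < C\<^sup>2"
    using equilibrium_sin(1)[OF assms(1), of 1] n_ge_2 by (simp add: c_def C_def field_simps)
  show "\<forall>\<mu>\<in>{1..n}. sign_pattern \<theta> \<mu> \<in> {-1, 1} \<and> cos (\<theta> \<mu>) = sign_pattern \<theta> \<mu> * sqrt (1 - q\<^sup>2 / C\<^sup>2)"
    using abs_cos \<open>0 < c\<close> unfolding c_def[symmetric] sign_pattern_def
    by (force simp: sgn_if abs_if split: if_splits)
qed

lemma equilibrium_order_R_root:
  assumes "is_equilibrium n \<omega> k \<theta>"
  shows "order_R n k \<theta> \<in> reduced_roots (\<Sum>\<mu>=1..n. sign_pattern \<theta> \<mu>) q"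
proof -
  define C where "C = (\<Sum>\<mu>=1..n. cos (\<theta> \<mu>))"
  define c where "c = sqrt (1 - q\<^sup>2 / C\<^sup>2)"
  have "0 < C" using equilibrium_sin(1)[OF assms, of 1] n_ge_2 by (simp add: C_def)
  have "q\<^sup>2 < C\<^sup>2" using equilibrium_cos(1)[OF assms] by (simp add: C_def)
  have "C = (\<Sum>\<mu>=1..n. sign_pattern \<theta> \<mu>) * c"
    unfolding C_def c_def sum_distrib_right using equilibrium_cos(2)[OF assms]
    by (intro sum.cong) (auto simp: C_def)
  moreover have "C * c = sqrt (C\<^sup>2 - q\<^sup>2)"
  proof -
    have "C\<^sup>2 * (1 - q\<^sup>2 / C\<^sup>2) = C\<^sup>2 - q\<^sup>2" using \<open>0 < C\<close> by (simp add: field_simps)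
    then have "sqrt (C\<^sup>2 - q\<^sup>2) = sqrt (C\<^sup>2) * c" by (metis c_def real_sqrt_mult)
    then show ?thesis using \<open>0 < C\<close> by simp
  qed
  ultimately have "reduced_f (\<Sum>\<mu>=1..n. sign_pattern \<theta> \<mu>) q (C\<^sup>2) = 0"
    by (simp add: reduced_f_def power2_eq_square algebra_simps)
  then show ?thesis
    using \<open>q\<^sup>2 < C\<^sup>2\<close> by (simp add: reduced_roots_def order_R_eq C_def)
qed

lemma equilibrium_angles_is_equilibrium:
  assumes \<sigma>: "\<sigma> \<in> PiE {1..n} (\<lambda>_. {-1, 1})" and R: "R \<in> reduced_roots (\<Sum>\<mu>=1..n. \<sigma> \<mu>) q"
  defines "\<theta> \<equiv> equilibrium_angles n q \<sigma> R"
  shows "is_equilibrium n \<omega> k \<theta>"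
    and "restrict (sign_pattern \<theta>) {1..n} = \<sigma>"
    and "order_R n k \<theta> = R"
proof -
  define c where "c = sqrt (1 - q\<^sup>2 / R)"
  have Rq: "q\<^sup>2 < R" and R0: "0 < R"
    using R mem_reduced_roots_iff[OF q_pos] by (auto simp: reduced_roots_def)
  have "q\<^sup>2 / R < 1" using Rq R0 by (simp add: field_simps)
  then have "0 < c" by (simp add: c_def)
  have cos_sin: "cos (\<theta> \<mu>) = \<sigma> \<mu> * c" "sin (\<theta> \<mu>) = block_sign n \<mu> * q / sqrt R"
    if "\<mu> \<in> {1..n}" for \<mu>
    using cos_sin_equilibrium_angles[where \<sigma> = \<sigma> and q = q and R = R] that PiE_mem[OF \<sigma> that] Rq
    by (simp_all add: \<theta>_def c_def)
  have sign: "sign_pattern \<theta> \<mu> = \<sigma> \<mu>" if "\<mu> \<in> {1..n}" for \<mu>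
    using cos_sin(1)[OF that] \<open>0 < c\<close> PiE_mem[OF \<sigma> that] by (auto simp: sign_pattern_def sgn_mult)
  have "sqrt (R - q\<^sup>2) = sqrt R * c"
  proof -
    have "R - q\<^sup>2 = R * (1 - q\<^sup>2 / R)" using R0 by (simp add: field_simps)
    then show ?thesis by (simp add: c_def real_sqrt_mult)
  qed
  then have "R = (\<Sum>\<mu>=1..n. \<sigma> \<mu>) * sqrt R * c" using R by (simp add: reduced_roots_def reduced_f_def)
  then have "sqrt R * sqrt R = sqrt R * ((\<Sum>\<mu>=1..n. \<sigma> \<mu>) * c)" using R0 by (simp add: ac_simps)
  then have "(\<Sum>\<mu>=1..n. \<sigma> \<mu>) * c = sqrt R"
    using R0 by (metis mult_left_cancel real_sqrt_gt_0_iff less_irrefl)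
  moreover have "(\<Sum>\<mu>=1..n. cos (\<theta> \<mu>)) = (\<Sum>\<mu>=1..n. \<sigma> \<mu>) * c"
    unfolding sum_distrib_right by (intro sum.cong) (simp_all add: cos_sin)
  ultimately have C: "(\<Sum>\<mu>=1..n. cos (\<theta> \<mu>)) = sqrt R" by simp
  have S: "(\<Sum>\<mu>=1..n. sin (\<theta> \<mu>)) = 0"
    using cos_sin(2) sum_block_sign[OF even_n] by (simp add: sum_divide_distrib[symmetric] sum_distrib_right[symmetric])
  have "\<theta> \<in> PiE {1..n} (\<lambda>_. {-pi<..pi})"
    unfolding \<theta>_def equilibrium_angles_def using Arg_bounded by auto
  then show "is_equilibrium n \<omega> k \<theta>"
    unfolding is_equilibrium_iff C S using cos_sin(2) R0 by simp
  show "restrict (sign_pattern \<theta>) {1..n} = \<sigma>"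
    using sign \<sigma> by (auto simp: PiE_def extensional_def)
  show "order_R n k \<theta> = R" unfolding order_R_eq C using R0 by simp
qed

lemma bij_betw_equilibria_roots:
  "bij_betw (\<lambda>\<theta>. (restrict (sign_pattern \<theta>) {1..n}, order_R n k \<theta>)) {\<theta>. is_equilibrium n \<omega> k \<theta>}
     (SIGMA \<sigma>:PiE {1..n} (\<lambda>_. {-1, 1}). reduced_roots (\<Sum>\<mu>=1..n. \<sigma> \<mu>) q)"
  (is "bij_betw ?F ?E ?P")
proof (rule bij_betw_imageI)
  show "inj_on ?F ?E"
  proof (rule inj_onI)
    fix \<theta> \<theta>' assume "\<theta> \<in> ?E" and "\<theta>' \<in> ?E" and "?F \<theta> = ?F \<theta>'"
    then have eq: "is_equilibrium n \<omega> k \<theta>" and eq': "is_equilibrium n \<omega> k \<theta>'"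
      and sign: "restrict (sign_pattern \<theta>) {1..n} = restrict (sign_pattern \<theta>') {1..n}"
      and R: "order_R n k \<theta> = order_R n k \<theta>'"
      by simp_all
    have "0 < (\<Sum>\<mu>=1..n. cos (\<theta> \<mu>))" "0 < (\<Sum>\<mu>=1..n. cos (\<theta>' \<mu>))"
      using equilibrium_sin(1)[OF eq, of 1] equilibrium_sin(1)[OF eq', of 1] n_ge_2 by auto
    then have C: "(\<Sum>\<mu>=1..n. cos (\<theta> \<mu>)) = (\<Sum>\<mu>=1..n. cos (\<theta>' \<mu>))"
      using R by (simp add: order_R_eq power2_eq_iff_nonneg)
    show "\<theta> = \<theta>'"
    proof (rule PiE_ext)
      show PiE: "\<theta> \<in> PiE {1..n} (\<lambda>_. {-pi<..pi})" "\<theta>' \<in> PiE {1..n} (\<lambda>_. {-pi<..pi})"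
        using eq eq' by (simp_all add: is_equilibrium_iff)
      fix \<mu> assume \<mu>: "\<mu> \<in> {1..n}"
      have "sign_pattern \<theta> \<mu> = sign_pattern \<theta>' \<mu>" using sign \<mu> by (metis restrict_apply')
      then have "cos (\<theta> \<mu>) = cos (\<theta>' \<mu>)"
        using equilibrium_cos(2)[OF eq] equilibrium_cos(2)[OF eq'] \<mu> C by simp
      moreover have "sin (\<theta> \<mu>) = sin (\<theta>' \<mu>)"
        using equilibrium_sin(2)[OF eq \<mu>] equilibrium_sin(2)[OF eq' \<mu>] C by simp
      ultimately show "\<theta> \<mu> = \<theta>' \<mu>"
        using eq_if_cos_sin_eq[OF PiE_mem[OF PiE(1) \<mu>] PiE_mem[OF PiE(2) \<mu>]] by blast
    qed
  qed
  show "?F ` ?E = ?P"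
  proof
    show "?F ` ?E \<subseteq> ?P"
    proof (rule image_subsetI)
      fix \<theta> assume "\<theta> \<in> ?E"
      then have eq: "is_equilibrium n \<omega> k \<theta>" by simp
      have "(\<Sum>\<mu>=1..n. restrict (sign_pattern \<theta>) {1..n} \<mu>) = (\<Sum>\<mu>=1..n. sign_pattern \<theta> \<mu>)"
        by (intro sum.cong) auto
      then show "?F \<theta> \<in> ?P"
        using equilibrium_cos(2)[OF eq] equilibrium_order_R_root[OF eq] by auto
    qed
    show "?P \<subseteq> ?F ` ?E"
    proof clarify
      fix \<sigma> R assume "\<sigma> \<in> PiE {1..n} (\<lambda>_. {-1, 1})" and "R \<in> reduced_roots (\<Sum>\<mu>=1..n. \<sigma> \<mu>) q"
      note angles = equilibrium_angles_is_equilibrium[OF this]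
      then show "(\<sigma>, R) \<in> ?F ` ?E"
        by (intro image_eqI[where x = "equilibrium_angles n q \<sigma> R"]) auto
    qed
  qed
qed

lemma sum_eq_mult_equilibria:
  "finite {\<theta>. is_equilibrium n \<omega> k \<theta>} \<and>
   (\<Sum>\<theta>\<in>{\<theta>. is_equilibrium n \<omega> k \<theta>}. eq_mult n \<omega> k \<theta>)
     = (\<Sum>\<sigma>\<in>PiE {1..n} (\<lambda>_. {-1, 1}). if 2 * q \<le> (\<Sum>\<mu>=1..n. \<sigma> \<mu>) then 2 else 0)"
proof
  let ?\<Sigma> = "SIGMA \<sigma>:PiE {1..n} (\<lambda>_. {-1, 1::real}). reduced_roots (\<Sum>\<mu>=1..n. \<sigma> \<mu>) q"
  let ?h = "\<lambda>(\<sigma>, R). root_mult (reduced_f (\<Sum>\<mu>=1..n. \<sigma> \<mu>) q) R"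
  have fin: "finite (PiE {1..n} (\<lambda>_. {-1, 1::real}))" by (intro finite_PiE) auto
  have fin_roots: "finite (reduced_roots s q)" for s
    by (rule sum_root_mult_reduced_roots(1)[OF q_pos])
  show "finite {\<theta>. is_equilibrium n \<omega> k \<theta>}"
    using bij_betw_finite[OF bij_betw_equilibria_roots] fin fin_roots by (simp add: finite_SigmaI)
  have "eq_mult n \<omega> k \<theta> = ?h (restrict (sign_pattern \<theta>) {1..n}, order_R n k \<theta>)" for \<theta>
  proof -
    have "(\<Sum>\<mu>=1..n. restrict (sign_pattern \<theta>) {1..n} \<mu>) = (\<Sum>\<mu>=1..n. sign_pattern \<theta> \<mu>)"
      by (intro sum.cong) auto
    then show ?thesis by (simp add: eq_mult_def f_sigma_eq_reduced_f)
  qed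
  then have "(\<Sum>\<theta>\<in>{\<theta>. is_equilibrium n \<omega> k \<theta>}. eq_mult n \<omega> k \<theta>) = (\<Sum>p\<in>?\<Sigma>. ?h p)"
    using sum.reindex_bij_betw[OF bij_betw_equilibria_roots, of ?h] by simp
  also have "\<dots> = (\<Sum>\<sigma>\<in>PiE {1..n} (\<lambda>_. {-1, 1}). \<Sum>R\<in>reduced_roots (\<Sum>\<mu>=1..n. \<sigma> \<mu>) q.
                     root_mult (reduced_f (\<Sum>\<mu>=1..n. \<sigma> \<mu>) q) R)"
    by (rule sum.Sigma[symmetric]) (use fin fin_roots in auto)
  also have "\<dots> = (\<Sum>\<sigma>\<in>PiE {1..n} (\<lambda>_. {-1, 1}). if 2 * q \<le> (\<Sum>\<mu>=1..n. \<sigma> \<mu>) then 2 else 0)"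
    by (simp add: sum_root_mult_reduced_roots(2)[OF q_pos])
  finally show "(\<Sum>\<theta>\<in>{\<theta>. is_equilibrium n \<omega> k \<theta>}. eq_mult n \<omega> k \<theta>)
     = (\<Sum>\<sigma>\<in>PiE {1..n} (\<lambda>_. {-1, 1}). if 2 * q \<le> (\<Sum>\<mu>=1..n. \<sigma> \<mu>) then 2 else 0)" .
qed

end

theorem theorem4:
  fixes n :: nat and q :: real and \<omega> k :: "nat \<Rightarrow> real"
  assumes "even n" and "n \<ge> 2" and "q > 0"
    and "\<omega> = (\<lambda>\<nu>. if \<nu> \<le> n div 2 then real n * q else - (real n * q))"
    and "k = (\<lambda>\<nu>. real n)"
  shows "finite {\<theta>. is_equilibrium n \<omega> k \<theta>} \<and>
         int (\<Sum>\<theta>\<in>{\<theta>. is_equilibrium n \<omega> k \<theta>}. eq_mult n \<omega> k \<theta>)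
           = 2 ^ n - (\<Sum>l\<in>{l::int. - q < of_int l \<and> of_int l < q}.
                        (if 0 \<le> int (n div 2) + l then int (n choose nat (int (n div 2) + l)) else 0))"
  using sum_eq_mult_equilibria[OF assms] sum_sign_vectors_threshold[OF assms(1,3)] by simp

end
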